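(* Let $\Delta\ge 4$ be an integer and for positive integers $i,j$ define \[ F(i,j)=(4\Delta-6)\Bigl(\frac{1}{i}+\frac{1}{j}\Bigr)+\Delta^2-6\Delta+3+\frac{6}{\Delta}-(i-j)^2 . \] Then for every integer $i$ with $3\le i\le \left\lfloor \frac{\Delta+3}{2}\right\rfloor$ we have the strict inequality \[ (\Delta-1)\,F(i,\Delta) > F(\Delta,\Delta). \] *)

theory Defs
  imports Complex_Main
begin

definition F :: "int \<Rightarrow> int \<Rightarrow> int \<Rightarrow> real" where
  "F D i j = (4 * real_of_int D - 6) * (1 / real_of_int i + 1 / real_of_int j)
     + (real_of_int D)^2 - 6 * real_of_int D + 3 + 6 / real_of_int D
     - (real_of_int i - real_of_int j)^2"

end

theory Submission
  imports Defs
begin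

text \<open>On the row \<open>j = \<Delta>\<close> the function \<open>F\<close> simplifies to
  \<open>(4\<Delta> - 6)/i + 2\<Delta>i - i\<^sup>2 - 6\<Delta> + 7\<close>, whose minimum over \<open>3 \<le> i \<le> (\<Delta> + 3)/2\<close> is
  attained at \<open>i = 3\<close>: the difference to the value at 3 factors as
  \<open>(i - 3)(3i(2\<Delta> - i - 3) - (4\<Delta> - 6))/(3i)\<close>.  It remains to compare
  \<open>(\<Delta> - 1) F(3, \<Delta>)\<close> with \<open>F(\<Delta>, \<Delta>)\<close>, and \<open>3\<Delta>\<close> times their difference is
  \<open>(\<Delta> - 3)(\<Delta> - 1)(\<Delta> + 6)\<close>.\<close>

lemma F_diag:
  assumes "D \<noteq> 0"
  shows "F D D D = (real_of_int D)\<^sup>2 - 6 * D + 11 - 6 / D"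
  using assms by (simp add: F_def field_simps power2_eq_square)

lemma F_row_diag:
  assumes "i \<noteq> 0" and "D \<noteq> 0"
  shows "F D i D = (4 * D - 6) / real_of_int i + 2 * D * i - (real_of_int i)\<^sup>2 - 6 * D + 7"
  using assms by (simp add: F_def field_simps power2_eq_square)

lemma F_row_diag_ge_at_3:
  assumes "4 \<le> D" and "3 \<le> i" and "2 * i \<le> D + 3"
  shows "F D 3 D \<le> F D i D"
proof -
  define d x where "d = real_of_int D" and "x = real_of_int i"
  have d: "4 \<le> d" and x: "3 \<le> x" and "2 * x \<le> d + 3"
    using assms by (simp_all add: d_def x_def flip: of_int_mult)
  then have "(3 * d - 9) / 2 \<le> 2 * d - x - 3" by simp
  then have "9 * ((3 * d - 9) / 2) \<le> 3 * x * (2 * d - x - 3)"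
    using x d by (intro mult_mono) simp_all
  then have "(x - 3) * (3 * x * (2 * d - x - 3) - (4 * d - 6)) \<ge> 0"
    using x d by simp
  moreover have "F D i D - F D 3 D = (x - 3) * (3 * x * (2 * d - x - 3) - (4 * d - 6)) / (3 * x)"
    using assms x by (simp add: F_row_diag d_def x_def field_simps power2_eq_square)
  ultimately have "0 \<le> F D i D - F D 3 D"
    using x by (simp add: divide_nonneg_pos)
  then show ?thesis by simp
qed

lemma F_diag_less_scaled_F_3:
  assumes "3 < D"
  shows "F D D D < (real_of_int D - 1) * F D 3 D"
proof -
  define d where "d = real_of_int D"
  have d: "3 < d" using assms by (simp add: d_def)
  have "3 * d * ((d - 1) * F D 3 D - F D D D) = (d - 3) * (d - 1) * (d + 6)"
    using assms by (simp add: F_diag F_row_diag d_def field_simps power2_eq_square)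
  moreover have "(d - 3) * (d - 1) * (d + 6) > 0"
    using d by simp
  ultimately have "0 < 3 * d * ((d - 1) * F D 3 D - F D D D)"
    by simp
  then show ?thesis
    using d by (simp add: d_def zero_less_mult_iff)
qed

theorem lemma4p3:
  fixes D i :: int
  assumes "D \<ge> 4"
    and "3 \<le> i" and "i \<le> \<lfloor>(real_of_int D + 3) / 2\<rfloor>"
  shows "(real_of_int D - 1) * F D i D > F D D D"
proof -
  have "2 * i \<le> D + 3"
    using assms(3) by (simp add: le_floor_iff field_simps flip: of_int_mult)
  then have "F D 3 D \<le> F D i D"
    by (rule F_row_diag_ge_at_3[OF assms(1,2)])
  then have "(real_of_int D - 1) * F D 3 D \<le> (real_of_int D - 1) * F D i D"
    using assms(1) by (simp add: mult_left_mono)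
  moreover have "F D D D < (real_of_int D - 1) * F D 3 D"
    using assms(1) by (simp add: F_diag_less_scaled_F_3)
  ultimately show ?thesis by linarith
qed

end
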